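(* Let $R$ be a root system with Weyl group $W$ and let $f_\alpha,g_\alpha$ ($\alpha\in R$) be meromorphic functions on $\mathbb{C}$ with $f_{-\alpha}(z)=-f_\alpha(-z)$ and $g_{-\alpha}(z)=-g_\alpha(-z)$. If the assignment $[\alpha]\mapsto\mathbf{D}_\alpha=f_\alpha((\alpha,\xi))+g_\alpha((\alpha,\xi))s_\alpha$ defines a representation of $\mathcal{B}_W$ on $\mathcal{M}$, then each $f_\alpha$ is an odd function and $g_\alpha(z)=f_\alpha(z)\phi_\alpha(z)$ for a meromorphic function $\phi_\alpha$ satisfying $\phi_\alpha(z)\phi_\alpha(-z)=1$.
   Context: $V$ is a real Euclidean space with inner product $(\cdot,\cdot)$, $R\subset V$ a reduced crystallographic root system with positive roots $R_+$, $W$ its Weyl group and $s_\alpha$ the reflection in $\alpha$. $\mathcal{M}$ is the space of meromorphic functions on the complexification $V_{\mathbb{C}}$ (variable $\xi$); $s_\alpha$ acts on $\mathcal{M}$ by $(s_\alpha F)(\xi)=F(s_\alpha\xi)$, so $\mathbf{D}_\alpha F(\xi)=f_\alpha((\alpha,\xi))F(\xi)+g_\alpha((\alpha,\xi))F(s_\alpha\xi)$. Nichols–Woronowicz algebra: let $M_W$ be the complex vector space spanned by symbols $[\alpha]$, $\alpha\in R$, with $[-\alpha]=-[\alpha]$, with braiding $\psi([\alpha]\otimes[\beta])=[s_\alpha(\beta)]\otimes[\alpha]$. On $M_W^{\otimes m}$ let $\psi_i$ be $\psi$ acting in positions $i,i+1$; for $w\in S_m$ with reduced word $w=s_{i_1}\cdots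 s_{i_l}$ put $\psi_w=\psi_{i_1}\cdots\psi_{i_l}$, and $\mathrm{Sym}_m=\sum_{w\in S_m}\psi_w$. Then $\mathcal{B}_W$ is $T(M_W)$ modulo the two-sided ideal $\bigoplus_{m\ge2}\ker\mathrm{Sym}_m$ (in particular $[\alpha]^2=0$ in $\mathcal{B}_W$). "Defines a representation" means the assignment extends to an algebra homomorphism from $\mathcal{B}_W$ to the linear operators on $\mathcal{M}$. *)

theory Defs
  imports "HOL-Complex_Analysis.Complex_Analysis"
begin

definition rrefl :: "real^'n \<Rightarrow> real^'n \<Rightarrow> real^'n" where
  "rrefl a x = x - (2 * (a \<bullet> x) / (a \<bullet> a)) *\<^sub>R a"

definition root_system :: "(real^'n) set \<Rightarrow> bool" where
  "root_system R \<longleftrightarrow> finite R \<and> 0 \<notin> R \<and> span R = UNIV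
     \<and> (\<forall>a\<in>R. \<forall>b\<in>R. rrefl a b \<in> R)
     \<and> (\<forall>a\<in>R. \<forall>b\<in>R. 2 * (a \<bullet> b) / (a \<bullet> a) \<in> \<int>)
     \<and> (\<forall>a\<in>R. \<forall>c::real. c *\<^sub>R a \<in> R \<longrightarrow> c = 1 \<or> c = -1)"

definition positive_system :: "(real^'n) set \<Rightarrow> (real^'n) set \<Rightarrow> bool" where
  "positive_system R P \<longleftrightarrow>
     (\<exists>v. (\<forall>a\<in>R. a \<bullet> v \<noteq> 0) \<and> P = {a\<in>R. 0 < a \<bullet> v})"

definition cpair :: "real^'n \<Rightarrow> complex^'n \<Rightarrow> complex" where
  "cpair a \<xi> = (\<Sum>i\<in>UNIV. complex_of_real (a $ i) * \<xi> $ i)"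

definition cvec :: "real^'n \<Rightarrow> complex^'n" where
  "cvec a = (\<chi> i. complex_of_real (a $ i))"

definition crefl :: "real^'n \<Rightarrow> complex^'n \<Rightarrow> complex^'n" where
  "crefl a \<xi> = \<xi> - (2 * cpair a \<xi> / complex_of_real (a \<bullet> a)) *s cvec a"

text \<open>Holomorphic functions of several complex variables on an open set:
  complex (Frechet) differentiable, i.e. the derivative is complex linear.\<close>
definition holo_on :: "(complex^'n \<Rightarrow> complex) \<Rightarrow> (complex^'n) set \<Rightarrow> bool" where
  "holo_on F U \<longleftrightarrow> open U \<and>
     (\<forall>z\<in>U. \<exists>c::complex^'n. (F has_derivative (\<lambda>h. \<Sum>i\<in>UNIV. c $ i * h $ i)) (at z))"

text \<open>Meromorphic functions on V_C: locally a quotient of holomorphic functions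
  with denominator not identically zero (values on the zero set of the
  denominator are irrelevant junk).\<close>
definition mero :: "(complex^'n \<Rightarrow> complex) \<Rightarrow> bool" where
  "mero F \<longleftrightarrow> (\<forall>p. \<exists>U g h. open U \<and> connected U \<and> p \<in> U \<and> holo_on g U \<and> holo_on h U
       \<and> (\<exists>z\<in>U. h z \<noteq> 0) \<and> (\<forall>z\<in>U. h z \<noteq> 0 \<longrightarrow> F z = g z / h z))"

text \<open>Equality in the space M of meromorphic functions: agreement off a nowhere
  dense set.\<close>
definition mero_eq :: "(complex^'n \<Rightarrow> complex) \<Rightarrow> (complex^'n \<Rightarrow> complex) \<Rightarrow> bool" where
  "mero_eq F G \<longleftrightarrow> interior (closure {z. F z \<noteq> G z}) = {}"

definition Dop :: "(real^'n \<Rightarrow> complex \<Rightarrow> complex) \<Rightarrow> (real^'n \<Rightarrow> complex \<Rightarrow> complex)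
     \<Rightarrow> real^'n \<Rightarrow> (complex^'n \<Rightarrow> complex) \<Rightarrow> (complex^'n \<Rightarrow> complex)" where
  "Dop f g a F = (\<lambda>\<xi>. f a (cpair a \<xi>) * F \<xi> + g a (cpair a \<xi>) * F (crefl a \<xi>))"

text \<open>Image of the monomial [a_1][a_2]...[a_m] : D_{a_1} o ... o D_{a_m}.\<close>
definition Dword :: "(real^'n \<Rightarrow> complex \<Rightarrow> complex) \<Rightarrow> (real^'n \<Rightarrow> complex \<Rightarrow> complex)
     \<Rightarrow> (real^'n) list \<Rightarrow> (complex^'n \<Rightarrow> complex) \<Rightarrow> (complex^'n \<Rightarrow> complex)" where
  "Dword f g xs = foldr (\<lambda>a T. Dop f g a \<circ> T) xs id"

text \<open>M_W has basis [a], a in P (positive roots), with [-a] = -[a].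
  A basis vector of M_W^{\<otimes>m} is a list of m positive roots;
  an element of M_W^{\<otimes>m} is a coefficient function on such lists.\<close>
definition tbasis :: "(real^'n) set \<Rightarrow> nat \<Rightarrow> (real^'n) list set" where
  "tbasis P m = {xs. length xs = m \<and> set xs \<subseteq> P}"

text \<open>Writing a root b as sign * [positive representative].\<close>
definition rpos :: "(real^'n) set \<Rightarrow> real^'n \<Rightarrow> real^'n" where
  "rpos P b = (if b \<in> P then b else - b)"
definition rsgn :: "(real^'n) set \<Rightarrow> real^'n \<Rightarrow> complex" where
  "rsgn P b = (if b \<in> P then 1 else -1)"

text \<open>psi_i acting on a signed basis tensor, positions i, i+1 (0-based):
  [a] (x) [b] |-> [s_a b] (x) [a].\<close>
definition psi_basis :: "(real^'n) set \<Rightarrow> nat \<Rightarrow> complex \<times> (real^'n) list \<Rightarrow> complex \<times> (real^'n) list" where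
  "psi_basis P i sx = (let e = fst sx; xs = snd sx; a = xs ! i; b = xs ! Suc i; c = rrefl a b in
      (e * rsgn P c, xs[i := rpos P c, Suc i := a]))"

text \<open>psi_{i_1} ... psi_{i_l} (psi_{i_l} applied first).\<close>
definition psi_word :: "(real^'n) set \<Rightarrow> nat list \<Rightarrow> complex \<times> (real^'n) list \<Rightarrow> complex \<times> (real^'n) list" where
  "psi_word P ws sx = foldr (psi_basis P) ws sx"

definition word_perm :: "nat list \<Rightarrow> nat \<Rightarrow> nat" where
  "word_perm ws = foldr (\<lambda>i p. Transposition.transpose i (Suc i) \<circ> p) ws id"

definition reduced_word :: "nat \<Rightarrow> (nat \<Rightarrow> nat) \<Rightarrow> nat list \<Rightarrow> bool" where
  "reduced_word m w ws \<longleftrightarrow> (\<forall>i\<in>set ws. Suc i < m) \<and> word_perm ws = w \<and>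
     (\<forall>vs. (\<forall>i\<in>set vs. Suc i < m) \<and> word_perm vs = w \<longrightarrow> length ws \<le> length vs)"

definition red_word :: "nat \<Rightarrow> (nat \<Rightarrow> nat) \<Rightarrow> nat list" where
  "red_word m w = (SOME ws. reduced_word m w ws)"

definition Sym :: "(real^'n) set \<Rightarrow> nat \<Rightarrow> ((real^'n) list \<Rightarrow> complex) \<Rightarrow> ((real^'n) list \<Rightarrow> complex)" where
  "Sym P m x = (\<lambda>ys. \<Sum>xs\<in>tbasis P m. x xs *
      (\<Sum>w\<in>{w. w permutes {0..<m}}.
         (let r = psi_word P (red_word m w) (1, xs) in if snd r = ys then fst r else 0)))"

definition ker_Sym :: "(real^'n) set \<Rightarrow> nat \<Rightarrow> ((real^'n) list \<Rightarrow> complex) set" where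
  "ker_Sym P m = {x. (\<forall>xs. xs \<notin> tbasis P m \<longrightarrow> x xs = 0) \<and> Sym P m x = (\<lambda>_. 0)}"

text \<open>The assignment [a] |-> D_a defines a representation of B_W on M:
  the induced algebra map T(M_W) -> End(M) kills every ker Sym_m, m >= 2
  (hence the two-sided ideal they generate).\<close>
definition defines_rep :: "(real^'n) set \<Rightarrow> (real^'n \<Rightarrow> complex \<Rightarrow> complex)
     \<Rightarrow> (real^'n \<Rightarrow> complex \<Rightarrow> complex) \<Rightarrow> bool" where
  "defines_rep P f g \<longleftrightarrow>
     (\<forall>m\<ge>2. \<forall>x\<in>ker_Sym P m. \<forall>F. mero F \<longrightarrow>
        mero_eq (\<lambda>\<xi>. \<Sum>xs\<in>tbasis P m. x xs * Dword f g xs F \<xi>) (\<lambda>_. 0))"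

end

theory Submission
  imports Defs
begin

text \<open>Since \<open>s\<^sub>\<alpha>\<alpha> = -\<alpha>\<close>, the braiding sends \<open>[\<alpha>]\<otimes>[\<alpha>]\<close> to \<open>-[\<alpha>]\<otimes>[\<alpha>]\<close>, so \<open>[\<alpha>]\<^sup>2\<close> lies in
  the kernel of \<open>Sym\<^sub>2\<close> and the representation forces \<open>D\<^sub>\<alpha>\<^sup>2 = 0\<close>. As \<open>s\<^sub>\<alpha>\<close> negates
  \<open>u = (\<alpha>,\<xi>)\<close>, applying \<open>D\<^sub>\<alpha>\<^sup>2\<close> to \<open>1\<close> and to \<open>u\<close> yields \<open>A + B = 0\<close> and \<open>u (A - B) = 0\<close>
  with \<open>A = f(u)\<^sup>2 + g(u) g(-u)\<close> and \<open>B = g(u) (f(u) + f(-u))\<close>. Hence \<open>A = B = 0\<close>. By the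
  identity theorem either \<open>g = 0\<close>, whence \<open>f = 0\<close>, or \<open>f\<close> is odd, nonzero, and
  \<open>\<phi> = g/f\<close> works. Negative roots reduce to positive ones via the symmetry hypotheses.\<close>

definition square_zero_relations :: "(complex \<Rightarrow> complex) \<Rightarrow> (complex \<Rightarrow> complex) \<Rightarrow> bool" where
  "square_zero_relations F G \<longleftrightarrow>
     (\<forall>\<^sub>\<approx>u. F u ^ 2 + G u * G (- u) = 0) \<and> (\<forall>\<^sub>\<approx>u. G u * (F u + F (- u)) = 0)"

lemma eventually_cosparse_uminus:
  assumes "\<forall>\<^sub>\<approx>z. P z"
  shows "\<forall>\<^sub>\<approx>z. P (- (z::complex))"
proof -
  have "\<forall>x. eventually P (at x)" using assms by (simp add: eventually_cosparse_open_eq)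
  then have "eventually (\<lambda>z. P (- z)) (at x)" for x
    using filtermap_at_minus[of x] eventually_filtermap[of P "\<lambda>z. - z" "at x"] by metis
  then show ?thesis by (simp add: eventually_cosparse_open_eq)
qed

lemma square_zero_relations_imp_odd_factorization:
  fixes F G :: "complex \<Rightarrow> complex"
  assumes mF: "F meromorphic_on UNIV" and mG: "G meromorphic_on UNIV"
    and rel: "square_zero_relations F G"
  shows "(\<forall>\<^sub>\<approx>z. F (- z) = - F z) \<and> (\<exists>\<phi>. \<phi> meromorphic_on UNIV \<and> (\<forall>\<^sub>\<approx>z. G z = F z * \<phi> z)
           \<and> (\<forall>\<^sub>\<approx>z. \<phi> z * \<phi> (- z) = 1))"
proof -
  from rel have e1: "\<forall>\<^sub>\<approx>u. F u ^ 2 + G u * G (- u) = 0"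
    and e2: "\<forall>\<^sub>\<approx>u. G u * (F u + F (- u)) = 0"
    unfolding square_zero_relations_def by auto
  consider "\<forall>\<^sub>\<approx>z. G z = 0" | "\<forall>\<^sub>\<approx>z. G z \<noteq> 0"
    using meromorphic_imp_constant_or_avoid[OF mG open_UNIV connected_UNIV, of 0] by blast
  then show ?thesis
  proof cases
    case 1
    have F0: "\<forall>\<^sub>\<approx>z. F z = 0" using 1 e1 by eventually_elim simp
    have "\<forall>\<^sub>\<approx>z. F (- z) = - F z"
      using F0 eventually_cosparse_uminus[OF F0] by eventually_elim simp
    moreover have "\<forall>\<^sub>\<approx>z. G z = F z * 1" using 1 F0 by eventually_elim simp
    ultimately show ?thesis by (intro conjI exI[of _ "\<lambda>_. 1"]) auto
  next
    case 2
    have odd: "\<forall>\<^sub>\<approx>z. F (- z) = - F z" using 2 e2 by eventually_elim (simp add: add_eq_0_iff)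
    have "\<forall>\<^sub>\<approx>z. F z \<noteq> 0"
    proof -
      have "\<not> (\<forall>\<^sub>\<approx>z. F z = 0)"
      proof
        assume "\<forall>\<^sub>\<approx>z. F z = 0"
        then have "\<forall>\<^sub>\<approx>z::complex. False"
          using 2 eventually_cosparse_uminus[OF 2] e1 by eventually_elim simp
        then show False by (simp add: eventually_False)
      qed
      then show ?thesis
        using meromorphic_imp_constant_or_avoid[OF mF open_UNIV connected_UNIV, of 0] by blast
    qed
    then have "\<forall>\<^sub>\<approx>z. G z = F z * (G z / F z)"
      and "\<forall>\<^sub>\<approx>z. (G z / F z) * (G (- z) / F (- z)) = 1"
      using odd e1 by (eventually_elim, auto simp: field_simps power2_eq_square add_eq_0_iff)+
    moreover have "(\<lambda>z. G z / F z) meromorphic_on UNIV" by (intro meromorphic_intros mF mG)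
    ultimately show ?thesis using odd by blast
  qed
qed

lemma square_zero_relations_reflect:
  assumes rel: "square_zero_relations F G"
    and hF: "\<forall>\<^sub>\<approx>z. F' z = - F (- z)" and hG: "\<forall>\<^sub>\<approx>z. G' z = - G (- z)"
  shows "square_zero_relations F' G'"
proof -
  from rel have S1: "\<forall>\<^sub>\<approx>u. F (- u) ^ 2 + G (- u) * G u = 0"
    and S2: "\<forall>\<^sub>\<approx>u. G (- u) * (F (- u) + F u) = 0"
    unfolding square_zero_relations_def
    using eventually_cosparse_uminus[of "\<lambda>u. F u ^ 2 + G u * G (- u) = 0"]
      eventually_cosparse_uminus[of "\<lambda>u. G u * (F u + F (- u)) = 0"] by auto
  have hF': "\<forall>\<^sub>\<approx>z. F' (- z) = - F z" using eventually_cosparse_uminus[OF hF] by simp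
  have hG': "\<forall>\<^sub>\<approx>z. G' (- z) = - G z" using eventually_cosparse_uminus[OF hG] by simp
  have "\<forall>\<^sub>\<approx>u. F' u ^ 2 + G' u * G' (- u) = 0"
    using hF hG hF' hG' S1 by eventually_elim (simp add: power2_eq_square)
  moreover have "\<forall>\<^sub>\<approx>u. G' u * (F' u + F' (- u)) = 0"
    using hF hG hF' hG' S2 by eventually_elim (simp add: algebra_simps)
  ultimately show ?thesis unfolding square_zero_relations_def ..
qed

lemma permutes_atLeastLessThan_2: "{w. w permutes {0..<(2::nat)}} = {id, Transposition.transpose 0 1}"
proof (intro equalityI subsetI)
  fix w assume "w \<in> {w. w permutes {0..<(2::nat)}}"
  then have w: "w permutes {0..<2}" by simp
  have w01: "w 0 \<in> {0..<2}" "w 1 \<in> {0..<2}" using permutes_in_image[OF w] by auto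
  have fixed: "n \<ge> 2 \<Longrightarrow> w n = n" for n using permutes_not_in[OF w] by auto
  have "w 0 \<noteq> w 1" using permutes_inj[OF w] by (metis inj_eq zero_neq_one)
  then consider "w 0 = 0" "w 1 = 1" | "w 0 = 1" "w 1 = 0" using w01 by fastforce
  then show "w \<in> {id, Transposition.transpose 0 1}"
  proof cases
    case 1
    then have "w n = id n" for n using fixed[of n] by (cases "n = 0"; cases "n = 1") auto
    then show ?thesis by auto
  next
    case 2
    then have "w n = Transposition.transpose 0 1 n" for n
      using fixed[of n] by (cases "n = 0"; cases "n = 1") auto
    then show ?thesis by auto
  qed
qed (auto intro: permutes_swap_id)

lemma reduced_word_red_word: "reduced_word m w ws \<Longrightarrow> reduced_word m w (red_word m w)"
  unfolding red_word_def by (rule someI)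

lemma red_word_id: "red_word m id = []"
proof -
  have "reduced_word m id []" by (simp add: reduced_word_def word_perm_def)
  then have "length (red_word m id) \<le> length ([] :: nat list)"
    using reduced_word_red_word unfolding reduced_word_def by blast
  then show ?thesis by simp
qed

lemma red_word_transpose_0_1: "red_word 2 (Transposition.transpose 0 1) = [0]"
proof -
  let ?t = "Transposition.transpose 0 (1::nat)"
  have ne: "?t \<noteq> id" by (metis id_apply transpose_apply_first zero_neq_one)
  have "reduced_word 2 ?t [0]"
    unfolding reduced_word_def
  proof (intro conjI allI impI ballI)
    fix vs assume "(\<forall>i\<in>set vs. Suc i < 2) \<and> word_perm vs = ?t"
    with ne have "vs \<noteq> []" by (auto simp: word_perm_def)
    then show "length [0::nat] \<le> length vs" by (cases vs) simp_all
  qed (simp_all add: word_perm_def)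
  then have r: "reduced_word 2 ?t (red_word 2 ?t)" by (rule reduced_word_red_word)
  with \<open>reduced_word 2 ?t [0]\<close> have "length (red_word 2 ?t) \<le> length [0::nat]"
    unfolding reduced_word_def by blast
  moreover have "red_word 2 ?t \<noteq> []" using r ne by (auto simp: reduced_word_def word_perm_def)
  moreover have "\<forall>i\<in>set (red_word 2 ?t). Suc i < 2" using r by (simp add: reduced_word_def)
  ultimately show ?thesis by (cases "red_word 2 ?t") auto
qed

lemma rrefl_self: "a \<noteq> 0 \<Longrightarrow> rrefl a a = - a"
  by (simp add: rrefl_def scaleR_2 algebra_simps)

lemma finite_tbasis: "finite P \<Longrightarrow> finite (tbasis P m)"
  by (rule finite_subset[OF _ finite_lists_length_eq[of P m]]) (auto simp: tbasis_def)

lemma square_in_ker_Sym: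
  assumes "a \<in> P" "- a \<notin> P" "a \<noteq> 0" "finite P"
  shows "(\<lambda>xs. if xs = [a, a] then 1 else 0) \<in> ker_Sym P 2"
proof -
  have tb: "[a, a] \<in> tbasis P 2" using assms by (simp add: tbasis_def)
  have braid: "psi_word P [0] (1, [a, a]) = (- 1, [a, a])"
    using assms by (simp add: psi_word_def psi_basis_def rrefl_self rsgn_def rpos_def)
  have "Transposition.transpose 0 (1::nat) \<noteq> id"
    by (metis id_apply transpose_apply_first zero_neq_one)
  then have "(\<Sum>w\<in>{w. w permutes {0..<2}}.
         (let r = psi_word P (red_word 2 w) (1, [a, a]) in if snd r = ys then fst r else 0)) = 0" for ys
    using braid red_word_transpose_0_1
    by (simp add: permutes_atLeastLessThan_2 red_word_id psi_word_def)
  then show ?thesis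
    using tb finite_tbasis[OF assms(4)] unfolding ker_Sym_def Sym_def
    by (simp add: if_distrib[of "\<lambda>c. c * _"] sum.delta' cong: if_cong)
qed

lemma defines_rep_imp_Dop_square_zero:
  assumes "a \<in> P" "- a \<notin> P" "a \<noteq> 0" "finite P"
    and rep: "defines_rep P f g" and F: "mero F"
  shows "mero_eq (Dop f g a (Dop f g a F)) (\<lambda>_. 0)"
proof -
  let ?x = "\<lambda>xs. if xs = [a, a] then 1 else (0::complex)"
  have "mero_eq (\<lambda>\<xi>. \<Sum>xs\<in>tbasis P 2. ?x xs * Dword f g xs F \<xi>) (\<lambda>_. 0)"
    using rep square_in_ker_Sym[OF assms(1-4)] F unfolding defines_rep_def by auto
  moreover have "[a, a] \<in> tbasis P 2" using assms by (simp add: tbasis_def)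
  ultimately show ?thesis using finite_tbasis[OF assms(4)]
    by (simp add: if_distrib[of "\<lambda>c. c * _"] sum.delta' Dword_def cong: if_cong)
qed

lemma cpair_diff: "cpair a (x - y) = cpair a x - cpair a y"
  by (simp add: cpair_def algebra_simps sum_subtractf)

lemma cpair_scaleC: "cpair a (c *s x) = c * cpair a x"
  by (simp add: cpair_def algebra_simps sum_distrib_left)

lemma cpair_cvec: "cpair a (cvec a) = complex_of_real (a \<bullet> a)"
  by (simp add: cpair_def cvec_def inner_vec_def)

lemma cpair_crefl: "a \<noteq> 0 \<Longrightarrow> cpair a (crefl a \<xi>) = - cpair a \<xi>"
  by (simp add: crefl_def cpair_diff cpair_scaleC cpair_cvec)

lemma bounded_linear_cpair: "bounded_linear (cpair a)"
  unfolding cpair_def[abs_def]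
  by (intro bounded_linear_sum bounded_linear_compose[OF bounded_linear_mult_right]
      bounded_linear_vec_nth)

lemma holo_on_const: "holo_on (\<lambda>_. c) UNIV"
  unfolding holo_on_def by (auto intro!: exI[of _ 0])

lemma holo_on_cpair: "holo_on (cpair a) UNIV"
proof -
  have "(\<lambda>h. \<Sum>i\<in>UNIV. cvec a $ i * h $ i) = cpair a"
    by (simp add: cvec_def cpair_def[abs_def])
  then show ?thesis unfolding holo_on_def
    by (auto intro!: exI[of _ "cvec a"]
        simp only: bounded_linear_imp_has_derivative[OF bounded_linear_cpair])
qed

lemma mero_if_holo_on_UNIV: "holo_on F UNIV \<Longrightarrow> mero F"
  unfolding mero_def
  by (intro allI, rule exI[of _ UNIV], rule exI[of _ F], rule exI[of _ "\<lambda>_. 1"])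
    (simp add: holo_on_const connected_UNIV)

text \<open>Otherwise \<open>H\<close> has no zeros on a punctured disc around \<open>0\<close>, and the preimage of that
  disc under \<open>\<xi> \<mapsto> (\<alpha>,\<xi>)\<close> is a nonempty open set on which \<open>H((\<alpha>,\<xi>)) \<noteq> 0\<close>.\<close>
lemma cosparse_zero_if_mero_eq_zero_along_root:
  fixes a :: "real^'n" and H :: "complex \<Rightarrow> complex"
  assumes a: "a \<noteq> 0" and m: "H meromorphic_on UNIV"
    and e: "mero_eq (\<lambda>\<xi>. H (cpair a \<xi>)) (\<lambda>_. 0)"
  shows "\<forall>\<^sub>\<approx>u. H u = 0"
proof (rule ccontr)
  assume "\<not> ?thesis"
  then have "\<forall>\<^sub>\<approx>u. H u \<noteq> 0"
    using meromorphic_imp_constant_or_avoid[OF m open_UNIV connected_UNIV, of 0] by blast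
  then have "eventually (\<lambda>u. H u \<noteq> 0) (at 0)"
    using eventually_cosparse_imp_eventually_at by blast
  then obtain r where r: "r > 0" "\<And>u. u \<noteq> 0 \<Longrightarrow> dist u 0 < r \<Longrightarrow> H u \<noteq> 0"
    unfolding eventually_at by blast
  define S where "S = {\<xi>. cpair a \<xi> \<noteq> 0 \<and> norm (cpair a \<xi>) < r}"
  have "continuous_on UNIV (cpair a)" using bounded_linear_cpair linear_continuous_on by blast
  then have oS: "open S" unfolding S_def
    by (intro open_Collect_conj open_Collect_neq open_Collect_less continuous_intros)
  have "S \<subseteq> closure {\<xi>. H (cpair a \<xi>) \<noteq> 0}"
    using r(2) closure_subset by (fastforce simp: S_def dist_norm)
  then have "S \<subseteq> interior (closure {\<xi>. H (cpair a \<xi>) \<noteq> 0})"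
    using oS by (rule interior_maximal)
  moreover
  define \<xi>\<^sub>0 where "\<xi>\<^sub>0 = (of_real (r / 2) / of_real (a \<bullet> a)) *s cvec a"
  have "cpair a \<xi>\<^sub>0 = of_real (r / 2)"
    using a by (simp add: \<xi>\<^sub>0_def cpair_scaleC cpair_cvec)
  then have "\<xi>\<^sub>0 \<in> S" unfolding S_def using r(1) by (simp del: of_real_divide)
  ultimately show False using e unfolding mero_eq_def by auto
qed

lemma Dop_Dop:
  assumes "a \<noteq> 0"
  shows "Dop f g a (Dop f g a F) \<xi> =
    f a (cpair a \<xi>) * (f a (cpair a \<xi>) * F \<xi> + g a (cpair a \<xi>) * F (crefl a \<xi>))
    + g a (cpair a \<xi>) * (f a (- cpair a \<xi>) * F (crefl a \<xi>) + g a (- cpair a \<xi>) * F (crefl a (crefl a \<xi>)))"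
  unfolding Dop_def cpair_crefl[OF assms] ..

lemma Dop_square_zero_imp_relations:
  fixes f g :: "real^'n \<Rightarrow> complex \<Rightarrow> complex"
  assumes a: "a \<noteq> 0" and mf: "f a meromorphic_on UNIV" and mg: "g a meromorphic_on UNIV"
    and D: "\<And>F. mero F \<Longrightarrow> mero_eq (Dop f g a (Dop f g a F)) (\<lambda>_. 0)"
  shows "square_zero_relations (f a) (g a)"
proof -
  define A where "A = (\<lambda>u. f a u ^ 2 + g a u * g a (- u))"
  define B where "B = (\<lambda>u. g a u * (f a u + f a (- u)))"
  have "(\<lambda>u::complex. - u) analytic_on UNIV" by (intro analytic_intros)
  then have "(\<lambda>u. f a (- u)) meromorphic_on UNIV" "(\<lambda>u. g a (- u)) meromorphic_on UNIV"
    by (auto intro: meromorphic_on_compose[OF mf] meromorphic_on_compose[OF mg])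
  then have mAB: "(\<lambda>u. A u + B u) meromorphic_on UNIV" "(\<lambda>u. u * (A u - B u)) meromorphic_on UNIV"
    unfolding A_def B_def by (intro meromorphic_intros mf mg; simp)+
  have "Dop f g a (Dop f g a (\<lambda>_. 1)) = (\<lambda>\<xi>. A (cpair a \<xi>) + B (cpair a \<xi>))"
    unfolding Dop_Dop[OF a] A_def B_def by (auto simp: algebra_simps power2_eq_square)
  then have sum0: "\<forall>\<^sub>\<approx>u. A u + B u = 0"
    using D[OF mero_if_holo_on_UNIV[OF holo_on_const[of 1]]]
      cosparse_zero_if_mero_eq_zero_along_root[OF a mAB(1)] by simp
  have "Dop f g a (Dop f g a (cpair a)) = (\<lambda>\<xi>. cpair a \<xi> * (A (cpair a \<xi>) - B (cpair a \<xi>)))"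
    unfolding Dop_Dop[OF a] cpair_crefl[OF a] A_def B_def
    by (auto simp: algebra_simps power2_eq_square)
  then have diff0: "\<forall>\<^sub>\<approx>u. u * (A u - B u) = 0"
    using D[OF mero_if_holo_on_UNIV[OF holo_on_cpair[of a]]]
      cosparse_zero_if_mero_eq_zero_along_root[OF a mAB(2)] by simp
  have "\<forall>\<^sub>\<approx>u::complex. u \<notin> {0}" by (intro eventually_not_in_cosparse) simp
  with sum0 diff0 have "\<forall>\<^sub>\<approx>u. A u = 0 \<and> B u = 0"
    by eventually_elim (simp add: add_eq_0_iff)
  then show ?thesis
    unfolding square_zero_relations_def A_def B_def by (auto elim: eventually_mono)
qed

theorem lemma1p2:
  fixes R P :: "(real^'n) set"
    and f g :: "real^'n \<Rightarrow> complex \<Rightarrow> complex"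
  assumes "root_system R"
    and "positive_system R P"
    and "\<forall>a\<in>R. f a meromorphic_on UNIV \<and> g a meromorphic_on UNIV"
    and "\<forall>a\<in>R. (\<forall>\<^sub>\<approx>z. f (- a) z = - f a (- z)) \<and> (\<forall>\<^sub>\<approx>z. g (- a) z = - g a (- z))"
    and "defines_rep P f g"
  shows "\<forall>a\<in>R. (\<forall>\<^sub>\<approx>z. f a (- z) = - f a z) \<and>
           (\<exists>\<phi>. \<phi> meromorphic_on UNIV \<and> (\<forall>\<^sub>\<approx>z. g a z = f a z * \<phi> z)
                \<and> (\<forall>\<^sub>\<approx>z. \<phi> z * \<phi> (- z) = 1))"
proof
  fix a assume aR: "a \<in> R"
  from assms(1) have "finite R" "0 \<notin> R" "- a \<in> R"
    using aR rrefl_self unfolding root_system_def by metis+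
  from assms(2) obtain v where v: "\<forall>b\<in>R. b \<bullet> v \<noteq> 0" and P: "P = {b\<in>R. 0 < b \<bullet> v}"
    unfolding positive_system_def by blast
  have positive: "square_zero_relations (f b) (g b)" if "b \<in> R" "0 < b \<bullet> v" for b
    using that P \<open>finite R\<close> \<open>0 \<notin> R\<close> assms(3)
    by (intro Dop_square_zero_imp_relations defines_rep_imp_Dop_square_zero[OF _ _ _ _ assms(5)])
      auto
  have "square_zero_relations (f a) (g a)"
  proof (cases "0 < a \<bullet> v")
    case False
    moreover have "a \<bullet> v \<noteq> 0" using v aR by blast
    ultimately have "0 < (- a) \<bullet> v" by (simp add: inner_minus_left)
    moreover have "\<forall>\<^sub>\<approx>z. f a z = - f (- a) (- z)" "\<forall>\<^sub>\<approx>z. g a z = - g (- a) (- z)"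
      using bspec[OF assms(4) \<open>- a \<in> R\<close>] by simp_all
    ultimately show ?thesis
      by (intro square_zero_relations_reflect[OF positive[OF \<open>- a \<in> R\<close>]])
  qed (use positive aR in auto)
  then show "(\<forall>\<^sub>\<approx>z. f a (- z) = - f a z) \<and>
           (\<exists>\<phi>. \<phi> meromorphic_on UNIV \<and> (\<forall>\<^sub>\<approx>z. g a z = f a z * \<phi> z)
                \<and> (\<forall>\<^sub>\<approx>z. \<phi> z * \<phi> (- z) = 1))"
    using assms(3) aR by (intro square_zero_relations_imp_odd_factorization) auto
qed

end
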